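(* Let $k\ge1$, let $R_1,\dots,R_k\in\mathcal R$, and let $n_1,\dots,n_k\in\mathbb N$ with $n_k=\max(n_1,\dots,n_k)$. Put $A=\pi_{n_1}^{-1}(R_1)\cap\dots\cap\pi_{n_k}^{-1}(R_k)\subset\widehat P$. Then $A=\pi_{n_k}^{-1}(B)$ for some simple set $B\subset P$.
   Context: Let $I=[-1,1]$ and $J=(1,2]$. For $t\in J$ let $f_t\colon I\to I$ be the core tent map $f_t(x)=\min\big(t(x-1)+3,\ t(1-x)-1\big)$. Let $P=I\times J$ and $F\colon P\to P$, $F(x,t)=(f_t(x),t)$. For a compact metric space $X$ and continuous surjection $g\colon X\to X$, the inverse limit is $\varprojlim(X,g)=\{\mathbf x=\langle x_0,x_1,\dots\rangle\in X^{\mathbb N}: g(x_{n+1})=x_n\ \forall n\}$ with the product topology (metric $d(\mathbf x,\mathbf y)=\sum_n d(x_n,y_n)/2^n$), and $\pi_n(\mathbf x)=x_n$. Let $\widehat P=\varprojlim(P,F)$ with projections $\pi_n\colon\widehat P\to P$. For $X\subset P$ write $X^{(t)}=X\cap(I\times\{t\})$. A tilted rectangle is a subset of $\mathbb R^2$ obtained by rotating an open (possibly empty) rectangle $(a_1,a_2)\times(b_1,b_2)$ by $\pi/4$; $\mathcal R$ is the set of tilted rectangles contained in $P$. A subset $B\subset P$ is simple if it is open in $P$ and $(\partial B)^{(t)}$ is finite for each $t\in J$. *)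

theory Defs
  imports "HOL-Analysis.Analysis"
begin

definition II :: "real set" where "II = {-1..1}"
definition JJ :: "real set" where "JJ = {1<..2}"

definition tent :: "real \<Rightarrow> real \<Rightarrow> real" where
  "tent t x = min (t * (x - 1) + 3) (t * (1 - x) - 1)"

definition PP :: "(real \<times> real) set" where "PP = II \<times> JJ"

definition FF :: "real \<times> real \<Rightarrow> real \<times> real" where
  "FF p = (tent (snd p) (fst p), snd p)"

definition invlim :: "'a set \<Rightarrow> ('a \<Rightarrow> 'a) \<Rightarrow> (nat \<Rightarrow> 'a) set" where
  "invlim X g = {xs. (\<forall>n. xs n \<in> X) \<and> (\<forall>n. g (xs (Suc n)) = xs n)}"

definition Phat :: "(nat \<Rightarrow> real \<times> real) set" where "Phat = invlim PP FF"

definition proj_pre :: "nat \<Rightarrow> (real \<times> real) set \<Rightarrow> (nat \<Rightarrow> real \<times> real) set" where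
  "proj_pre n X = {xs \<in> Phat. xs n \<in> X}"

definition slice :: "(real \<times> real) set \<Rightarrow> real \<Rightarrow> (real \<times> real) set" where
  "slice X t = X \<inter> (II \<times> {t})"

definition rot4 :: "real \<times> real \<Rightarrow> real \<times> real" where
  "rot4 p = ((fst p - snd p) / sqrt 2, (fst p + snd p) / sqrt 2)"

definition tilted_rect :: "(real \<times> real) set \<Rightarrow> bool" where
  "tilted_rect S \<longleftrightarrow> (\<exists>a1 a2 b1 b2. S = rot4 ` ({a1<..<a2} \<times> {b1<..<b2}))"

definition RR :: "(real \<times> real) set set" where
  "RR = {S. tilted_rect S \<and> S \<subseteq> PP}"

definition simple_set :: "(real \<times> real) set \<Rightarrow> bool" where
  "simple_set B \<longleftrightarrow> openin (top_of_set PP) B \<and>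
     (\<forall>t\<in>JJ. finite (slice ((top_of_set PP) frontier_of B) t))"

end

theory Submission
  imports Defs
begin

text \<open>
  A thread of the inverse limit satisfies x_m = F^(N-m)(x_N) for m <= N, so with N = n_k
  the set A is the preimage under pi_N of B = P \<inter> \<Inter>_i F^-(N-n_i)(R_i). B is open since F is
  continuous, and its boundary lies in the union of the sets F^-(N-n_i)(\<partial>R_i). The boundary
  of a tilted rectangle meets each horizontal line in at most four points, and F preserves
  horizontal lines while each tent map f_t is at most two-to-one, so every horizontal slice
  of \<partial>B is finite.
\<close>

lemma FF_funpow: "(FF ^^ m) (x, t) = ((tent t ^^ m) x, t)"
  by (induction m) (auto simp: FF_def)

lemma continuous_on_FF_funpow: "continuous_on UNIV (FF ^^ m)"
proof (induction m)
  case 0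
  then show ?case by (simp add: continuous_on_id)
next
  case (Suc m)
  have "continuous_on UNIV FF"
    unfolding FF_def tent_def by (intro continuous_intros)
  then have "continuous_on (range (FF ^^ m)) FF"
    by (rule continuous_on_subset) simp
  then show ?case
    using continuous_on_compose[OF Suc] by simp
qed

lemma Phat_funpow:
  assumes "xs \<in> Phat"
  shows "(FF ^^ d) (xs (m + d)) = xs m"
proof (induction d)
  case 0
  then show ?case by simp
next
  case (Suc d)
  have "FF (xs (m + Suc d)) = xs (m + d)"
    using assms by (simp add: Phat_def invlim_def)
  then show ?case
    using Suc by (simp add: funpow_Suc_right del: funpow.simps)
qed

lemma proj_pre_eq_proj_pre_funpow:
  assumes "m \<le> N"
  shows "proj_pre m X = proj_pre N ((FF ^^ (N - m)) -` X)"
  using Phat_funpow[where m = m and d = "N - m"] assms by (auto simp: proj_pre_def)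

lemma proj_pre_Int_PP: "proj_pre N (PP \<inter> X) = proj_pre N X"
  by (auto simp: proj_pre_def Phat_def invlim_def)

lemma proj_pre_INT:
  assumes "I \<noteq> {}"
  shows "(\<Inter>i\<in>I. proj_pre N (X i)) = proj_pre N (\<Inter>i\<in>I. X i)"
  using assms by (auto simp: proj_pre_def)

lemma finite_vimage_tent:
  assumes "t \<noteq> 0" and "finite D"
  shows "finite (tent t -` D)"
proof -
  have "tent t -` D \<subseteq> (\<Union>c\<in>D. {1 + (c - 3) / t, 1 - (c + 1) / t})"
  proof
    fix x
    assume "x \<in> tent t -` D"
    moreover have "x = 1 + (tent t x - 3) / t \<or> x = 1 - (tent t x + 1) / t"
      using \<open>t \<noteq> 0\<close> unfolding tent_def min_def by (auto simp: field_simps)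
    ultimately show "x \<in> (\<Union>c\<in>D. {1 + (c - 3) / t, 1 - (c + 1) / t})"
      by blast
  qed
  then show ?thesis
    using assms(2) finite_subset by blast
qed

lemma finite_vimage_tent_funpow:
  assumes "t \<noteq> 0" and "finite D"
  shows "finite ((tent t ^^ m) -` D)"
  using assms(2)
proof (induction m arbitrary: D)
  case 0
  then show ?case by simp
next
  case (Suc m)
  have "finite ((tent t ^^ m) -` (tent t -` D))"
    using Suc.IH finite_vimage_tent[OF assms(1) Suc.prems] by blast
  then show ?case
    by (simp add: vimage_comp comp_def)
qed

lemma finite_slice_vimage_FF_funpow:
  assumes "t \<noteq> 0" and "finite {x. (x, t) \<in> C}"
  shows "finite {x. (FF ^^ m) (x, t) \<in> C}"
  using finite_vimage_tent_funpow[OF assms] by (simp add: FF_funpow vimage_def)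

lemma frontier_vimage_subset:
  fixes f :: "'a::t2_space \<Rightarrow> 'b::topological_space"
  assumes "continuous_on UNIV f"
  shows "frontier (f -` S) \<subseteq> f -` frontier S"
proof -
  have "\<forall>x. isCont f x"
    using assms by (simp add: continuous_on_eq_continuous_within)
  then have "closure (f -` S) \<subseteq> f -` closure S"
    by (intro closure_minimal) (use closure_subset in blast, simp add: continuous_closed_vimage)
  moreover from \<open>\<forall>x. isCont f x\<close> have "f -` interior S \<subseteq> interior (f -` S)"
    by (intro interior_maximal) (use interior_subset in blast, simp add: continuous_open_vimage)
  ultimately show ?thesis
    unfolding frontier_def by blast
qed

lemma frontier_INT_subset:
  assumes "finite I"
  shows "frontier (\<Inter>i\<in>I. A i) \<subseteq> (\<Union>i\<in>I. frontier (A i))"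
  using assms
proof (induction I rule: finite_induct)
  case empty
  then show ?case by simp
next
  case (insert j I)
  then show ?case
    using frontier_Int_subset[of "A j" "\<Inter>i\<in>I. A i"] by auto
qed

lemma frontier_of_subtopology_Int_open_subset:
  assumes "open U"
  shows "(top_of_set S) frontier_of (S \<inter> U) \<subseteq> frontier U"
proof -
  have "openin (top_of_set S) (S \<inter> U)"
    using assms by (simp add: openin_open_Int)
  then have "(top_of_set S) frontier_of (S \<inter> U) = S \<inter> closure (S \<inter> U) - S \<inter> U"
    by (simp add: frontier_of_openin closure_of_subtopology inf.absorb2)
  also have "\<dots> \<subseteq> closure U - U"
    using closure_mono[of "S \<inter> U" U] by blast
  finally show ?thesis
    using assms by (simp add: frontier_def interior_open)
qed

definition rot4_inv :: "real \<times> real \<Rightarrow> real \<times> real" where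
  "rot4_inv q = ((fst q + snd q) / sqrt 2, (snd q - fst q) / sqrt 2)"

lemma continuous_on_rot4_inv: "continuous_on UNIV rot4_inv"
  unfolding rot4_inv_def by (intro continuous_intros) auto

lemma rot4_image_eq_vimage: "rot4 ` X = rot4_inv -` X"
proof -
  have sqrt2: "sqrt 2 * sqrt 2 = (2::real)" "sqrt 2 \<noteq> (0::real)"
    by simp_all
  have inv: "rot4_inv (rot4 p) = p" "rot4 (rot4_inv p) = p" for p
    unfolding rot4_def rot4_inv_def using sqrt2
    by (cases p; simp add: field_simps)+
  show ?thesis
  proof (intro set_eqI iffI)
    fix q
    assume "q \<in> rot4 ` X"
    then show "q \<in> rot4_inv -` X"
      using inv(1) by auto
  next
    fix q
    assume "q \<in> rot4_inv -` X"
    then show "q \<in> rot4 ` X"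
      using inv(2)[of q] by (metis image_eqI vimageD)
  qed
qed

lemma open_tilted_rect:
  assumes "tilted_rect S"
  shows "open S"
  using assms continuous_on_rot4_inv
  by (auto simp: tilted_rect_def rot4_image_eq_vimage open_Times continuous_on_eq_continuous_within
      intro!: continuous_open_vimage)

lemma finite_slice_frontier_tilted_rect:
  assumes "tilted_rect S"
  shows "finite {x. (x, t) \<in> frontier S}"
proof -
  obtain a1 a2 b1 b2 where S: "S = rot4_inv -` ({a1<..<a2} \<times> {b1<..<b2})"
    using assms by (auto simp: tilted_rect_def rot4_image_eq_vimage)
  have "closure ({a1<..<a2} \<times> {b1<..<b2}) \<subseteq> {a1..a2} \<times> {b1..b2}"
    by (intro closure_minimal) (auto intro: closed_Times)
  then have "frontier ({a1<..<a2} \<times> {b1<..<b2}) \<subseteq> {p. fst p \<in> {a1, a2} \<or> snd p \<in> {b1, b2}}"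
    by (auto simp: frontier_def interior_open open_Times)
  then have "frontier S \<subseteq> rot4_inv -` {p. fst p \<in> {a1, a2} \<or> snd p \<in> {b1, b2}}"
    using frontier_vimage_subset[OF continuous_on_rot4_inv] unfolding S by blast
  then have "{x. (x, t) \<in> frontier S} \<subseteq>
      {a1 * sqrt 2 - t, a2 * sqrt 2 - t, t - b1 * sqrt 2, t - b2 * sqrt 2}"
    by (auto simp: rot4_inv_def field_simps)
  then show ?thesis
    using finite_subset by blast
qed

lemma simple_set_Int_vimage_FF_funpow:
  assumes "finite I" and "\<And>i. i \<in> I \<Longrightarrow> tilted_rect (R i)"
  shows "simple_set (PP \<inter> (\<Inter>i\<in>I. (FF ^^ m i) -` R i))"
proof -
  let ?U = "\<Inter>i\<in>I. (FF ^^ m i) -` R i"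
  have "open ((FF ^^ m i) -` R i)" if "i \<in> I" for i
    using continuous_on_FF_funpow open_tilted_rect[OF assms(2)[OF that]]
    by (auto intro: continuous_open_vimage simp: continuous_on_eq_continuous_within)
  then have "open ?U"
    using assms(1) by (intro open_INT) auto
  have "(top_of_set PP) frontier_of (PP \<inter> ?U) \<subseteq> frontier ?U"
    using \<open>open ?U\<close> by (rule frontier_of_subtopology_Int_open_subset)
  also have "\<dots> \<subseteq> (\<Union>i\<in>I. frontier ((FF ^^ m i) -` R i))"
    using assms(1) by (rule frontier_INT_subset)
  also have "\<dots> \<subseteq> (\<Union>i\<in>I. (FF ^^ m i) -` frontier (R i))"
    by (intro UN_mono order_refl frontier_vimage_subset continuous_on_FF_funpow)
  finally have "slice ((top_of_set PP) frontier_of (PP \<inter> ?U)) t \<subseteq>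
      (\<lambda>x. (x, t)) ` (\<Union>i\<in>I. {x. (FF ^^ m i) (x, t) \<in> frontier (R i)})" for t
    unfolding slice_def by blast
  moreover have "finite (\<Union>i\<in>I. {x. (FF ^^ m i) (x, t) \<in> frontier (R i)})" if "t \<in> JJ" for t
    using that assms finite_slice_frontier_tilted_rect
    by (intro finite_UN_I finite_slice_vimage_FF_funpow) (auto simp: JJ_def)
  ultimately have "\<forall>t\<in>JJ. finite (slice ((top_of_set PP) frontier_of (PP \<inter> ?U)) t)"
    by (meson finite_imageI finite_subset)
  then show ?thesis
    using \<open>open ?U\<close> by (simp add: simple_set_def openin_open_Int)
qed

theorem mainTheorem2:
  fixes k :: nat and R :: "nat \<Rightarrow> (real \<times> real) set" and n :: "nat \<Rightarrow> nat"
  assumes "k \<ge> 1"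
    and "\<forall>i<k. R i \<in> RR"
    and "n (k - 1) = Max (n ` {..<k})"
  shows "\<exists>B. B \<subseteq> PP \<and> simple_set B \<and>
           (\<Inter>i\<in>{..<k}. proj_pre (n i) (R i)) = proj_pre (n (k - 1)) B"
proof -
  define N where "N = n (k - 1)"
  define B where "B = PP \<inter> (\<Inter>i\<in>{..<k}. (FF ^^ (N - n i)) -` R i)"
  have le_N: "n i \<le> N" if "i < k" for i
    using assms(3) that by (simp add: N_def)
  have "(\<Inter>i\<in>{..<k}. proj_pre (n i) (R i)) = (\<Inter>i\<in>{..<k}. proj_pre N ((FF ^^ (N - n i)) -` R i))"
    using le_N by (intro INF_cong refl proj_pre_eq_proj_pre_funpow) simp
  also have "\<dots> = proj_pre N (\<Inter>i\<in>{..<k}. (FF ^^ (N - n i)) -` R i)"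
    using assms(1) by (intro proj_pre_INT) (simp add: lessThan_empty_iff)
  also have "\<dots> = proj_pre N B"
    by (simp add: B_def proj_pre_Int_PP)
  finally have "(\<Inter>i\<in>{..<k}. proj_pre (n i) (R i)) = proj_pre N B" .
  moreover have "simple_set B"
    using assms(2) unfolding B_def RR_def by (intro simple_set_Int_vimage_FF_funpow) auto
  ultimately show ?thesis
    unfolding N_def B_def by blast
qed

end
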